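(* Let $G=(N,A)$ be an $s$-$t$ DAG (parallel arcs allowed) and let $uv,xy\in A$. If $uv$ is the immediate $s$-dominator of $xy$, then the immediate $t$-dominator of $uv$ $t$-dominates $xy$.
   Context: An $s$-$t$ DAG is a directed acyclic multigraph with a unique source $s$ and a unique sink $t$ such that every node is reachable from $s$ and every node reaches $t$. An arc $ab$ $s$-dominates an arc $cd$ if $ab=cd$ or every $s$-$c$ path contains $ab$; $ab$ $t$-dominates $cd$ if $ab=cd$ or every $d$-$t$ path contains $ab$; strict domination additionally requires $ab\neq cd$. The immediate $s$-dominator of an arc $cd$ is the strict $s$-dominator of $cd$ that is $s$-dominated by all strict $s$-dominators of $cd$; immediate $t$-dominators are defined symmetrically. The arc dominator trees have an abstract root (corresponding to $s$, resp. $t$): if an arc has no strict $t$-dominator, its immediate $t$-dominator is this abstract root, which by convention $t$-dominates every arc. *)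

theory Defs
  imports "Graph_Theory.Digraph" "Graph_Theory.Arc_Walk"
begin

definition st_dag :: "('a,'b) pre_digraph \<Rightarrow> 'a \<Rightarrow> 'a \<Rightarrow> bool" where
  "st_dag G s t \<longleftrightarrow>
     fin_digraph G \<and>
     (\<forall>u p. pre_digraph.awalk G u p u \<longrightarrow> p = []) \<and>
     s \<in> verts G \<and> t \<in> verts G \<and>
     in_arcs G s = {} \<and> (\<forall>v\<in>verts G. in_arcs G v = {} \<longrightarrow> v = s) \<and>
     out_arcs G t = {} \<and> (\<forall>v\<in>verts G. out_arcs G v = {} \<longrightarrow> v = t) \<and>
     (\<forall>v\<in>verts G. reachable G s v \<and> reachable G v t)"

definition sdom :: "('a,'b) pre_digraph \<Rightarrow> 'a \<Rightarrow> 'b \<Rightarrow> 'b \<Rightarrow> bool" where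
  "sdom G s ab cd \<longleftrightarrow> ab = cd \<or>
     (\<forall>p. pre_digraph.awalk G s p (tail G cd) \<longrightarrow> ab \<in> set p)"

definition tdom :: "('a,'b) pre_digraph \<Rightarrow> 'a \<Rightarrow> 'b \<Rightarrow> 'b \<Rightarrow> bool" where
  "tdom G t ab cd \<longleftrightarrow> ab = cd \<or>
     (\<forall>p. pre_digraph.awalk G (head G cd) p t \<longrightarrow> ab \<in> set p)"

definition strict_sdom :: "('a,'b) pre_digraph \<Rightarrow> 'a \<Rightarrow> 'b \<Rightarrow> 'b \<Rightarrow> bool" where
  "strict_sdom G s ab cd \<longleftrightarrow> sdom G s ab cd \<and> ab \<noteq> cd"

definition strict_tdom :: "('a,'b) pre_digraph \<Rightarrow> 'a \<Rightarrow> 'b \<Rightarrow> 'b \<Rightarrow> bool" where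
  "strict_tdom G t ab cd \<longleftrightarrow> tdom G t ab cd \<and> ab \<noteq> cd"

text \<open>Arc dominator tree nodes: None is the abstract root, Some e is an arc.
The abstract root dominates every arc.\<close>
definition sdom_node :: "('a,'b) pre_digraph \<Rightarrow> 'a \<Rightarrow> 'b option \<Rightarrow> 'b \<Rightarrow> bool" where
  "sdom_node G s w cd \<longleftrightarrow> (case w of None \<Rightarrow> True | Some ab \<Rightarrow> sdom G s ab cd)"

definition tdom_node :: "('a,'b) pre_digraph \<Rightarrow> 'a \<Rightarrow> 'b option \<Rightarrow> 'b \<Rightarrow> bool" where
  "tdom_node G t w cd \<longleftrightarrow> (case w of None \<Rightarrow> True | Some ab \<Rightarrow> tdom G t ab cd)"

definition is_imm_sdom :: "('a,'b) pre_digraph \<Rightarrow> 'a \<Rightarrow> 'b option \<Rightarrow> 'b \<Rightarrow> bool" where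
  "is_imm_sdom G s w cd \<longleftrightarrow>
     (case w of
        None \<Rightarrow> \<not> (\<exists>e\<in>arcs G. strict_sdom G s e cd)
      | Some ab \<Rightarrow> ab \<in> arcs G \<and> strict_sdom G s ab cd \<and>
                   (\<forall>e\<in>arcs G. strict_sdom G s e cd \<longrightarrow> sdom G s e ab))"

definition is_imm_tdom :: "('a,'b) pre_digraph \<Rightarrow> 'a \<Rightarrow> 'b option \<Rightarrow> 'b \<Rightarrow> bool" where
  "is_imm_tdom G t w cd \<longleftrightarrow>
     (case w of
        None \<Rightarrow> \<not> (\<exists>e\<in>arcs G. strict_tdom G t e cd)
      | Some ab \<Rightarrow> ab \<in> arcs G \<and> strict_tdom G t ab cd \<and>
                   (\<forall>e\<in>arcs G. strict_tdom G t e cd \<longrightarrow> tdom G t e ab))"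

end

theory Submission
  imports Defs
begin

text \<open>Let ab strictly t-dominate uv and suppose some path P from the
head of xy to t avoids ab. Every s-path to xy passes through uv, and continuing it along xy
and P gives a path from the head of uv to t, which must contain ab; so ab occurs after uv on
every s-path to xy. Hence ab strictly s-dominates xy, and by immediacy of uv it s-dominates uv
as well. Then ab occurs both before and after uv on an s-path to xy, closing a cycle.\<close>

context wf_digraph
begin

lemma awalk_split_at_arc:
  assumes "awalk u p v" "e \<in> set p"
  obtains p1 p2 where "p = p1 @ e # p2" "awalk u p1 (tail G e)" "awalk (head G e) p2 v"
proof -
  obtain p1 p2 where "p = p1 @ e # p2"
    using assms(2) by (metis in_set_conv_decomp)
  with assms(1) show thesis
    by (intro that) (auto simp: awalk_Cons_iff)
qed

lemma strict_tdom_occurs_after_sdom: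
  assumes "sdom G s uv xy" "strict_tdom G t ab uv" "\<not> tdom G t ab xy"
    and "xy \<in> arcs G" "awalk s p (tail G xy)"
  obtains p1 p2 where "p = p1 @ uv # p2" "awalk s p1 (tail G uv)"
    "awalk (head G uv) p2 (tail G xy)" "ab \<in> set p2"
proof -
  obtain P where P: "awalk (head G xy) P t" "ab \<notin> set P" and "ab \<noteq> xy"
    using assms(3) unfolding tdom_def by blast
  have "uv \<noteq> xy"
    using assms(2,3) by (auto simp: strict_tdom_def)
  then have "uv \<in> set p"
    using assms(1,5) unfolding sdom_def by blast
  with assms(5) obtain p1 p2 where p: "p = p1 @ uv # p2" "awalk s p1 (tail G uv)"
      "awalk (head G uv) p2 (tail G xy)"
    by (rule awalk_split_at_arc)
  have "awalk (head G uv) (p2 @ xy # P) t"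
    using p(3) P(1) assms(4) by (simp add: awalk_Cons_iff)
  then have "ab \<in> set (p2 @ xy # P)"
    using assms(2) unfolding strict_tdom_def tdom_def by blast
  with P(2) \<open>ab \<noteq> xy\<close> have "ab \<in> set p2" by simp
  with p show thesis by (rule that)
qed

lemma strict_sdom_if_strict_tdom_not_tdom:
  assumes "sdom G s uv xy" "strict_tdom G t ab uv" "\<not> tdom G t ab xy" "xy \<in> arcs G"
  shows "strict_sdom G s ab xy"
proof -
  have "ab \<in> set p" if "awalk s p (tail G xy)" for p
    by (rule strict_tdom_occurs_after_sdom[OF assms that]) simp
  moreover have "ab \<noteq> xy"
    using assms(3) by (auto simp: tdom_def)
  ultimately show ?thesis
    by (simp add: strict_sdom_def sdom_def)
qed

lemma strict_sdom_no_awalk_back: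
  assumes acyclic: "\<And>u p. awalk u p u \<Longrightarrow> p = []"
    and "strict_sdom G s ab uv" "ab \<in> arcs G" "uv \<in> arcs G"
    and "awalk s p (tail G uv)" "awalk (head G uv) q (tail G ab)"
  shows False
proof -
  have "ab \<in> set p"
    using assms(2,5) by (auto simp: strict_sdom_def sdom_def)
  with assms(5) obtain p2 where "awalk (head G ab) p2 (tail G uv)"
    by (rule awalk_split_at_arc)
  with assms(3,4,6) have "awalk (head G ab) (p2 @ uv # q @ [ab]) (head G ab)"
    by (simp add: awalk_Cons_iff awalk_Nil_iff)
  then show False
    using acyclic by blast
qed

lemma tdom_if_strict_tdom_of_imm_sdom:
  assumes acyclic: "\<And>u p. awalk u p u \<Longrightarrow> p = []"
    and "reachable G s (tail G xy)" "uv \<in> arcs G" "xy \<in> arcs G"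
    and "is_imm_sdom G s (Some uv) xy" "ab \<in> arcs G" "strict_tdom G t ab uv"
  shows "tdom G t ab xy"
proof (rule ccontr)
  assume not_tdom: "\<not> tdom G t ab xy"
  have uv: "sdom G s uv xy" "\<forall>e\<in>arcs G. strict_sdom G s e xy \<longrightarrow> sdom G s e uv"
    using assms(5) by (auto simp: is_imm_sdom_def strict_sdom_def)
  have "strict_sdom G s ab xy"
    using uv(1) assms(7) not_tdom assms(4) by (rule strict_sdom_if_strict_tdom_not_tdom)
  with uv(2) assms(6,7) have ab_sdom_uv: "strict_sdom G s ab uv"
    by (simp add: strict_sdom_def strict_tdom_def)
  obtain p where "awalk s p (tail G xy)"
    using assms(2) by (auto simp: reachable_awalk)
  with uv(1) assms(7) not_tdom assms(4) obtain p1 p2 where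
    p1: "awalk s p1 (tail G uv)" and p2: "awalk (head G uv) p2 (tail G xy)" "ab \<in> set p2"
    by (rule strict_tdom_occurs_after_sdom)
  from p2 obtain q where "awalk (head G uv) q (tail G ab)"
    by (rule awalk_split_at_arc)
  with acyclic ab_sdom_uv assms(6,3) p1 show False
    by (rule strict_sdom_no_awalk_back)
qed

end

theorem lemma7:
  fixes G :: "('a,'b) pre_digraph" and s t :: 'a and uv xy :: 'b
  assumes "st_dag G s t"
    and "uv \<in> arcs G" and "xy \<in> arcs G"
    and "is_imm_sdom G s (Some uv) xy"
  shows "\<forall>w. is_imm_tdom G t w uv \<longrightarrow> tdom_node G t w xy"
proof (intro allI impI)
  fix w assume w: "is_imm_tdom G t w uv"
  show "tdom_node G t w xy"
  proof (cases w)
    case None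
    then show ?thesis by (simp add: tdom_node_def)
  next
    case (Some ab)
    interpret wf_digraph G
      using assms(1) unfolding st_dag_def fin_digraph_def by blast
    have acyclic: "\<And>u p. awalk u p u \<Longrightarrow> p = []"
      and "reachable G s (tail G xy)"
      using assms(1,3) unfolding st_dag_def by simp_all
    moreover have "ab \<in> arcs G" "strict_tdom G t ab uv"
      using w Some by (auto simp: is_imm_tdom_def)
    ultimately have "tdom G t ab xy"
      using assms(2-4) by (intro tdom_if_strict_tdom_of_imm_sdom)
    with Some show ?thesis
      by (simp add: tdom_node_def)
  qed
qed

end
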